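(* Let $0<p<\infty$ and let $m,n\ge1$ be integers. Then there does not exist any continuous map $\tau:\mathbb{R}^m\to\mathbb{R}^n$ such that the composition operator $C_\tau f=f\circ\tau$ is bounded from $L^{p}(\mathbb{R}^n)$ to $L^\infty(\mathbb{R}^m)$.
   Context: $\mathbb{R}^n,\mathbb{R}^m$ carry Lebesgue measure. Boundedness means $\|C_\tau f\|_{L^\infty(\mathbb{R}^m)}\le C\|f\|_{L^{p}(\mathbb{R}^n)}$ for some $C$ and all $f\in L^{p}(\mathbb{R}^n)$. *)

theory Defs
  imports "HOL-Analysis.Analysis" "HOL-Probability.Essential_Supremum"
begin

definition Lp_integral :: "real \<Rightarrow> ('a::euclidean_space \<Rightarrow> real) \<Rightarrow> ennreal" where
  "Lp_integral p f = (\<integral>\<^sup>+ x. ennreal (\<bar>f x\<bar> powr p) \<partial>lborel)"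

definition in_Lp :: "real \<Rightarrow> ('a::euclidean_space \<Rightarrow> real) \<Rightarrow> bool" where
  "in_Lp p f \<longleftrightarrow> f \<in> borel_measurable lborel \<and> Lp_integral p f < \<infinity>"

definition Lp_norm :: "real \<Rightarrow> ('a::euclidean_space \<Rightarrow> real) \<Rightarrow> real" where
  "Lp_norm p f = enn2real (Lp_integral p f) powr (1 / p)"

definition Linf_norm :: "('a::euclidean_space \<Rightarrow> real) \<Rightarrow> ereal" where
  "Linf_norm g = esssup lborel (\<lambda>x. ereal \<bar>g x\<bar>)"

definition comp_op_bounded_Lp_Linf ::
    "real \<Rightarrow> ('a::euclidean_space \<Rightarrow> 'b::euclidean_space) \<Rightarrow> bool" where
  "comp_op_bounded_Lp_Linf p \<tau> \<longleftrightarrow>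
     (\<exists>C. \<forall>f. in_Lp p f \<longrightarrow> Linf_norm (f \<circ> \<tau>) \<le> ereal (C * Lp_norm p f))"

end

theory Submission
  imports Defs
begin

text \<open>
  Apply the operator to the indicator of a closed ball of radius \<open>r\<close> around \<open>\<tau> x\<^sub>0\<close>.
  Its \<open>L\<^sup>p\<close> norm is the \<open>p\<close>-th root of the volume of the ball, which tends to \<open>0\<close> with \<open>r\<close>.
  By continuity, its composition with \<open>\<tau>\<close> equals \<open>1\<close> on an open neighbourhood of \<open>x\<^sub>0\<close>,
  which has positive measure, so the \<open>L\<^sup>\<infinity>\<close> norm of the image is at least \<open>1\<close> for every \<open>r\<close>.
\<close>

lemma Lp_integral_indicator:
  assumes "A \<in> sets borel"
  shows "Lp_integral p (indicator A :: 'a::euclidean_space \<Rightarrow> real) = emeasure lborel A"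
proof -
  have "ennreal (\<bar>indicator A x\<bar> powr p) = indicator A x" for x :: 'a
    by (simp add: indicator_def)
  then show ?thesis
    unfolding Lp_integral_def using assms by simp
qed

lemma in_Lp_indicator:
  assumes "A \<in> sets borel" "emeasure lborel A < \<infinity>"
  shows "in_Lp p (indicator A :: 'a::euclidean_space \<Rightarrow> real)"
  using assms by (simp add: in_Lp_def Lp_integral_indicator)

lemma Lp_norm_indicator:
  assumes "A \<in> sets borel"
  shows "Lp_norm p (indicator A :: 'a::euclidean_space \<Rightarrow> real) = measure lborel A powr (1 / p)"
  using assms by (simp add: Lp_norm_def Lp_integral_indicator measure_def)

lemma Linf_norm_ge_on_open:
  fixes g :: "'a::euclidean_space \<Rightarrow> real"
  assumes "open S" "x \<in> S" "\<forall>y\<in>S. c \<le> \<bar>g y\<bar>"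
  shows "ereal c \<le> Linf_norm g"
proof (rule ccontr)
  assume "\<not> ereal c \<le> Linf_norm g"
  then have "AE y in lborel. ereal \<bar>g y\<bar> < ereal c"
    using esssup_AE[of "\<lambda>y. ereal \<bar>g y\<bar>" lborel]
    unfolding Linf_norm_def by (elim eventually_mono) (meson le_less_trans not_le)
  moreover obtain d where "0 < d" "ball x d \<subseteq> S"
    using assms(1,2) open_contains_ball by blast
  ultimately have "AE y in lborel. y \<notin> ball x d"
    using assms(3) by (elim eventually_mono) force
  then have "emeasure lborel (ball x d) = 0"
    by (subst (asm) AE_iff_measurable[of "ball x d"]) auto
  with \<open>0 < d\<close> show False
    using unit_ball_vol_pos[of "real DIM('a)"] by (simp add: emeasure_ball)
qed

lemma comp_op_bound_cball:
  fixes \<tau> :: "'a::euclidean_space \<Rightarrow> 'b::euclidean_space"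
  assumes "continuous_on UNIV \<tau>" "0 < r"
    and bounded: "\<forall>f. in_Lp p f \<longrightarrow> Linf_norm (f \<circ> \<tau>) \<le> ereal (C * Lp_norm p f)"
  shows "1 \<le> C * measure lborel (cball (\<tau> x) r) powr (1 / p)"
proof -
  let ?f = "indicator (cball (\<tau> x) r) :: 'b \<Rightarrow> real"
  have "open (\<tau> -` ball (\<tau> x) r)"
    using assms(1) by (simp add: continuous_on_open_vimage)
  moreover have "x \<in> \<tau> -` ball (\<tau> x) r"
    using \<open>0 < r\<close> by simp
  ultimately have "ereal 1 \<le> Linf_norm (?f \<circ> \<tau>)"
    by (rule Linf_norm_ge_on_open) auto
  also have "\<dots> \<le> ereal (C * Lp_norm p ?f)"
    using bounded in_Lp_indicator[OF borel_closed[OF closed_cball] emeasure_lborel_cball_finite]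
    by blast
  finally show ?thesis
    by (simp add: Lp_norm_indicator[OF borel_closed[OF closed_cball]])
qed

lemma measure_cball_tendsto_0:
  "((\<lambda>r. measure lborel (cball (y::'a::euclidean_space) r)) \<longlongrightarrow> 0) (at_right 0)"
proof -
  have "((\<lambda>r. unit_ball_vol DIM('a) * r ^ DIM('a)) \<longlongrightarrow> 0) (at_right 0)"
    by (intro tendsto_mult_right_zero tendsto_eq_intros) (auto simp: DIM_positive)
  moreover have "\<forall>\<^sub>F r in at_right 0. unit_ball_vol DIM('a) * r ^ DIM('a) = measure lborel (cball y r)"
    using eventually_at_right_less by (rule eventually_mono) (simp add: content_cball)
  ultimately show ?thesis
    by (rule Lim_transform_eventually)
qed

theorem proposition5p6:
  fixes p :: real
  assumes "0 < p"
  shows "\<not> (\<exists>\<tau> :: real^'m \<Rightarrow> real^'n.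
             continuous_on UNIV \<tau> \<and> comp_op_bounded_Lp_Linf p \<tau>)"
proof
  assume "\<exists>\<tau> :: real^'m \<Rightarrow> real^'n. continuous_on UNIV \<tau> \<and> comp_op_bounded_Lp_Linf p \<tau>"
  then obtain \<tau> :: "real^'m \<Rightarrow> real^'n" and C where "continuous_on UNIV \<tau>"
    and bounded: "\<forall>f. in_Lp p f \<longrightarrow> Linf_norm (f \<circ> \<tau>) \<le> ereal (C * Lp_norm p f)"
    unfolding comp_op_bounded_Lp_Linf_def by blast
  let ?bound = "\<lambda>r. C * measure lborel (cball (\<tau> 0) r) powr (1 / p)"
  have "(?bound \<longlongrightarrow> 0) (at_right 0)"
    using \<open>0 < p\<close>
    by (intro tendsto_mult_right_zero tendsto_zero_powrI[where b = "1 / p"] measure_cball_tendsto_0)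
      auto
  then have "\<forall>\<^sub>F r in at_right 0. ?bound r < 1 \<and> 0 < r"
    by (intro eventually_conj order_tendstoD(2) eventually_at_right_less) auto
  then obtain r where "?bound r < 1" "0 < r"
    using eventually_happens trivial_limit_at_right_real by blast
  with comp_op_bound_cball[OF \<open>continuous_on UNIV \<tau>\<close> \<open>0 < r\<close> bounded, where x = 0]
  show False by simp
qed

end
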